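(* Let $n\ge p\ge 4$ and let $K_{n+1}=(V,E)$ be the complete graph on $V=\{0,\dots,n\}$. Then $\dim P^p_{[0,n]}(K_{n+1})=|E|-4$ if $p\le n-1$, and $\dim P^p_{[0,n]}(K_{n+1})=|E|-n-2$ if $p=n$.
   Context: For an undirected graph $G=(V,E)$ with $V=\{0,\dots,n\}$, a $[0,n]$-$p$-path is a simple (undirected) path from $0$ to $n$ with exactly $p$ edges, and $P^p_{[0,n]}(G)\subseteq\mathbb{R}^E$ is the convex hull of the incidence vectors of all $[0,n]$-$p$-paths in $G$. *)

theory Defs
  imports "HOL-Analysis.Analysis" "HOL-Library.Function_Algebras"
begin

text \<open>Real-valued functions on an index set form a real vector space
  (pointwise operations); R^E is embedded as functions supported on E.\<close>

instantiation "fun" :: (type, real_vector) real_vector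
begin
definition scaleR_fun :: "real \<Rightarrow> ('a \<Rightarrow> 'b) \<Rightarrow> 'a \<Rightarrow> 'b"
  where "scaleR_fun c f = (\<lambda>x. c *\<^sub>R f x)"
instance
  by standard (auto simp: scaleR_fun_def fun_eq_iff scaleR_add_right scaleR_add_left)
end

definition complete_edges :: "nat \<Rightarrow> nat set set" where
  "complete_edges n = {{i, j} | i j. i \<le> n \<and> j \<le> n \<and> i \<noteq> j}"

definition path_edges :: "nat list \<Rightarrow> nat set set" where
  "path_edges vs = {{vs ! i, vs ! Suc i} | i. Suc i < length vs}"

definition is_p_path :: "nat set set \<Rightarrow> nat \<Rightarrow> nat \<Rightarrow> nat list \<Rightarrow> bool" where
  "is_p_path E n p vs \<longleftrightarrow>
     length vs = p + 1 \<and> distinct vs \<and> set vs \<subseteq> {0..n} \<and>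
     hd vs = 0 \<and> last vs = n \<and>
     (\<forall>i. Suc i < length vs \<longrightarrow> {vs ! i, vs ! Suc i} \<in> E)"

definition incidence_vec :: "nat set set \<Rightarrow> nat set \<Rightarrow> real" where
  "incidence_vec F = (\<lambda>e. if e \<in> F then 1 else 0)"

definition path_polytope :: "nat set set \<Rightarrow> nat \<Rightarrow> nat \<Rightarrow> (nat set \<Rightarrow> real) set" where
  "path_polytope E n p =
     convex hull {incidence_vec (path_edges vs) | vs. is_p_path E n p vs}"

definition affine_dimension :: "('a::real_vector) set \<Rightarrow> int" where
  "affine_dimension S = (if S = {} then -1 else int (dim {x - y | x y. x \<in> S \<and> y \<in> S}))"

end

theory Submission
  imports Defs
begin

text \<open>
  For a suitable set S
  of 4 edges (p < n), resp. n + 2 edges (p = n), these equations force a direction of the polytope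
  that is supported on S to vanish, so the directions embed into the coordinates outside S.
  Conversely, two p-paths that differ only inside a short window (one middle vertex replaced, or
  two middle vertices swapped) give directions that generate every unit vector modulo the
  coordinates in S. Hence the dimension is |E| - |S|.
\<close>

section \<open>Linear algebra of coordinate functions\<close>

definition diffs :: "'a::real_vector set \<Rightarrow> 'a set" where
  "diffs S = {x - y | x y. x \<in> S \<and> y \<in> S}"

lemma linear_eq_zero_on_span_diffs_hull:
  fixes \<phi> :: "'a::real_vector \<Rightarrow> real"
  assumes lin: "linear \<phi>" and const: "\<And>x. x \<in> X \<Longrightarrow> \<phi> x = c"
    and g: "g \<in> span (diffs (convex hull X))"
  shows "\<phi> g = 0"
proof -
  interpret \<phi>: linear \<phi> by (fact lin)
  have "convex (\<phi> -` {c})" by (rule convex_linear_vimage[OF lin convex_singleton])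
  then have "convex hull X \<subseteq> \<phi> -` {c}"
    by (intro hull_minimal) (auto simp: const)
  then have "\<phi> x = c" if "x \<in> convex hull X" for x
    using that by blast
  then have "diffs (convex hull X) \<subseteq> {x. \<phi> x = 0}"
    by (auto simp: diffs_def \<phi>.diff)
  moreover have "subspace {x. \<phi> x = 0}"
    by (auto simp: real_vector.subspace_def \<phi>.add \<phi>.scale)
  ultimately show ?thesis using g real_vector.span_minimal by blast
qed

lemma linear_eval: "linear (\<lambda>f :: 'a \<Rightarrow> real. f x)"
  by (auto intro: linearI simp: scaleR_fun_def)

lemma linear_sum_apply: "linear (\<lambda>f :: 'a \<Rightarrow> real. \<Sum>e\<in>E. f e)"
  by (intro real_vector.linear_compose_sum ballI linear_eval)

lemma span_mem_of_diff: "x - y \<in> span S \<Longrightarrow> y \<in> span S \<Longrightarrow> x \<in> span S"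
  by (metis diff_add_cancel real_vector.span_add)

definition vanishing_on :: "'a set \<Rightarrow> ('a \<Rightarrow> real) set" where
  "vanishing_on I = {g. \<forall>x\<in>I. g x = 0}"

lemma subspace_vanishing_on: "subspace (vanishing_on I)"
  by (auto simp: real_vector.subspace_def vanishing_on_def scaleR_fun_def)

lemma independent_biorthogonal:
  fixes v :: "'a \<Rightarrow> 'a \<Rightarrow> real"
  assumes v: "\<And>i j. i \<in> I \<Longrightarrow> j \<in> I \<Longrightarrow> v i j = (if j = i then 1 else 0)"
  shows "independent (v ` I)" and "inj_on v I"
proof -
  show "inj_on v I"
    by (rule inj_onI) (metis v zero_neq_one)
  show "independent (v ` I)"
    unfolding real_vector.dependent_def
  proof
    assume "\<exists>b\<in>v ` I. b \<in> span (v ` I - {b})"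
    then obtain i where i: "i \<in> I" "v i \<in> span (v ` I - {v i})"
      by blast
    have "v ` I - {v i} \<subseteq> {f. f i = 0}"
      using v i(1) by auto
    moreover have "subspace {f :: 'a \<Rightarrow> real. f i = 0}"
      by (auto simp: real_vector.subspace_def scaleR_fun_def)
    ultimately have "span (v ` I - {v i}) \<subseteq> {f. f i = 0}"
      by (rule real_vector.span_minimal)
    then show False
      using i v[OF i(1) i(1)] by auto
  qed
qed

lemma sum_scaleR_biorthogonal_apply:
  fixes v :: "'a \<Rightarrow> 'a \<Rightarrow> real"
  assumes "finite I" "j \<in> I" "\<And>i. i \<in> I \<Longrightarrow> v i j = (if j = i then 1 else 0)"
  shows "(\<Sum>i\<in>I. c i *\<^sub>R v i) j = c j"
proof -
  have "(\<Sum>i\<in>I. c i *\<^sub>R v i) j = (\<Sum>i\<in>I. c i * v i j)"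
    using real_vector.linear_sum[OF linear_eval] by (simp add: scaleR_fun_def)
  also have "\<dots> = (\<Sum>i\<in>I. if i = j then c j else 0)"
    using assms(3) by (intro sum.cong) auto
  also have "\<dots> = c j"
    using assms(1,2) by simp
  finally show ?thesis .
qed

lemma span_biorthogonal_eq:
  fixes v :: "'a \<Rightarrow> 'a \<Rightarrow> real"
  assumes fin: "finite I" and v_span: "\<And>i. i \<in> I \<Longrightarrow> v i \<in> span D"
    and v_coord: "\<And>i j. i \<in> I \<Longrightarrow> j \<in> I \<Longrightarrow> v i j = (if j = i then 1 else 0)"
    and inj: "\<And>g. g \<in> span D \<Longrightarrow> g \<in> vanishing_on I \<Longrightarrow> g = 0"
  shows "span (v ` I) = span D"
proof
  show "span (v ` I) \<subseteq> span D"
    using v_span by (intro real_vector.span_minimal) (auto simp: real_vector.subspace_span)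
  show "span D \<subseteq> span (v ` I)"
  proof
    fix f assume f: "f \<in> span D"
    let ?h = "f - (\<Sum>i\<in>I. f i *\<^sub>R v i)"
    have "?h \<in> span D"
      using f v_span by (intro real_vector.span_diff real_vector.span_sum real_vector.span_scale) auto
    moreover have "?h \<in> vanishing_on I"
      using fin v_coord by (simp add: vanishing_on_def sum_scaleR_biorthogonal_apply)
    ultimately have "f = (\<Sum>i\<in>I. f i *\<^sub>R v i)"
      using inj by fastforce
    also have "\<dots> \<in> span (v ` I)"
      by (intro real_vector.span_sum real_vector.span_scale real_vector.span_base) auto
    finally show "f \<in> span (v ` I)" .
  qed
qed

lemma dim_eq_card_coordinates:
  fixes D :: "('a \<Rightarrow> real) set"
  assumes fin: "finite I"
    and inj: "\<And>g. g \<in> span D \<Longrightarrow> g \<in> vanishing_on I \<Longrightarrow> g = 0"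
    and surj: "\<And>i. i \<in> I \<Longrightarrow> (\<lambda>x. if x = i then 1 else 0) \<in> span (D \<union> vanishing_on I)"
  shows "dim D = card I"
proof -
  have "\<exists>u \<in> span D. \<forall>j\<in>I. u j = (if j = i then 1 else 0)" if i: "i \<in> I" for i
  proof -
    obtain u z where "u \<in> span D" "z \<in> vanishing_on I" "(\<lambda>x. if x = i then 1 else 0) = u + z"
      using surj[OF i]
      unfolding real_vector.span_Un real_vector.span_eq_iff[THEN iffD2, OF subspace_vanishing_on]
      by blast
    then show ?thesis
      by (intro bexI[of _ u]) (auto simp: vanishing_on_def fun_eq_iff)
  qed
  then obtain v where v_span: "\<And>i. i \<in> I \<Longrightarrow> v i \<in> span D"
    and v_coord: "\<And>i j. i \<in> I \<Longrightarrow> j \<in> I \<Longrightarrow> v i j = (if j = i then 1 else 0)"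
    by metis
  have "dim D = dim (span (v ` I))"
    using span_biorthogonal_eq[OF fin v_span v_coord inj] by (metis real_vector.dim_span)
  also have "\<dots> = card (v ` I)"
    by (rule real_vector.dim_span_eq_card_independent[OF independent_biorthogonal(1)[OF v_coord]])
  also have "\<dots> = card I"
    by (rule card_image[OF independent_biorthogonal(2)[OF v_coord]])
  finally show ?thesis .
qed

section \<open>Paths in the complete graph as edge vectors\<close>

lemma obtain_distinct_list_of_card:
  fixes U :: "'a::linorder set"
  assumes "finite U" "f \<le> card U"
  obtains F where "distinct F" "set F \<subseteq> U" "length F = f"
proof -
  obtain B where "B \<subseteq> U" "card B = f"
    using assms(2) by (meson obtain_subset_with_card_n)
  moreover from this assms(1) have "finite B"
    by (meson finite_subset)
  ultimately show thesis
    by (intro that[of "sorted_list_of_set B"]) auto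
qed

definition edge_vec :: "nat \<Rightarrow> nat \<Rightarrow> nat set \<Rightarrow> real" where
  "edge_vec a b = (\<lambda>e. if e = {a, b} then 1 else 0)"

lemma edge_vec_commute: "edge_vec a b = edge_vec b a"
  by (simp add: edge_vec_def insert_commute)

fun walk_vec :: "nat list \<Rightarrow> nat set \<Rightarrow> real" where
  "walk_vec [] = 0"
| "walk_vec [v] = 0"
| "walk_vec (u # v # vs) = edge_vec u v + walk_vec (v # vs)"

lemma walk_vec_append: "walk_vec (xs @ v # ys) = walk_vec (xs @ [v]) + walk_vec (v # ys)"
  by (induction xs rule: walk_vec.induct) (auto simp: algebra_simps)

lemma path_edges_Cons_Cons: "path_edges (u # v # vs) = insert {u, v} (path_edges (v # vs))"
  unfolding path_edges_def
proof (intro set_eqI iffI)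
  fix e assume "e \<in> {{(u # v # vs) ! i, (u # v # vs) ! Suc i} |i. Suc i < length (u # v # vs)}"
  then obtain i where "e = {(u # v # vs) ! i, (u # v # vs) ! Suc i}" "Suc i < length (u # v # vs)"
    by blast
  then show "e \<in> insert {u, v} {{(v # vs) ! i, (v # vs) ! Suc i} |i. Suc i < length (v # vs)}"
    by (cases i) auto
next
  fix e assume "e \<in> insert {u, v} {{(v # vs) ! i, (v # vs) ! Suc i} |i. Suc i < length (v # vs)}"
  then show "e \<in> {{(u # v # vs) ! i, (u # v # vs) ! Suc i} |i. Suc i < length (u # v # vs)}"
  proof
    assume "e = {u, v}"
    then show ?thesis by force
  next
    assume "e \<in> {{(v # vs) ! i, (v # vs) ! Suc i} |i. Suc i < length (v # vs)}"
    then obtain i where "e = {(v # vs) ! i, (v # vs) ! Suc i}" "Suc i < length (v # vs)"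
      by blast
    then show ?thesis by (intro CollectI exI[of _ "Suc i"]) auto
  qed
qed

lemma path_edges_subset: "e \<in> path_edges vs \<Longrightarrow> e \<subseteq> set vs"
  by (auto simp: path_edges_def)

lemma incidence_vec_path_edges: "distinct vs \<Longrightarrow> incidence_vec (path_edges vs) = walk_vec vs"
proof (induction vs rule: walk_vec.induct)
  case (3 u v vs)
  have "{u, v} \<notin> path_edges (v # vs)"
    using "3.prems" path_edges_subset[of "{u, v}" "v # vs"] by auto
  then have "incidence_vec (path_edges (u # v # vs)) = edge_vec u v + incidence_vec (path_edges (v # vs))"
    by (auto simp: path_edges_Cons_Cons incidence_vec_def edge_vec_def fun_eq_iff)
  with 3 show ?case by simp
qed (auto simp: path_edges_def incidence_vec_def)

lemma finite_complete_edges: "finite (complete_edges n)"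
  by (rule finite_subset[of _ "Pow {0..n}"]) (auto simp: complete_edges_def)

lemma edge_in_complete_edges: "i \<le> n \<Longrightarrow> j \<le> n \<Longrightarrow> i \<noteq> j \<Longrightarrow> {i, j} \<in> complete_edges n"
  by (auto simp: complete_edges_def)

lemma is_p_path_complete_edges_iff:
  "is_p_path (complete_edges n) n p vs \<longleftrightarrow>
     length vs = p + 1 \<and> distinct vs \<and> set vs \<subseteq> {0..n} \<and> hd vs = 0 \<and> last vs = n"
proof -
  have "{vs ! i, vs ! Suc i} \<in> complete_edges n"
    if "Suc i < length vs" "distinct vs" "set vs \<subseteq> {0..n}" for i
  proof -
    have "vs ! i \<noteq> vs ! Suc i"
      using that by (simp add: nth_eq_iff_index_eq)
    moreover have "vs ! i \<le> n" "vs ! Suc i \<le> n"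
      using that(1,3) nth_mem[of i vs] nth_mem[of "Suc i" vs] by (auto simp del: nth_mem)
    ultimately show ?thesis
      unfolding complete_edges_def by blast
  qed
  then show ?thesis
    unfolding is_p_path_def by blast
qed

lemma is_p_path_through_inner:
  assumes "distinct vs" "set vs \<subseteq> {1..<n}" "p = length vs + 1" "0 < n"
  shows "is_p_path (complete_edges n) n p (0 # vs @ [n])"
  using assms by (auto simp: is_p_path_complete_edges_iff)

abbreviation complete_path_polytope :: "nat \<Rightarrow> nat \<Rightarrow> (nat set \<Rightarrow> real) set" where
  "complete_path_polytope n p \<equiv> path_polytope (complete_edges n) n p"

abbreviation path_dirs :: "nat \<Rightarrow> nat \<Rightarrow> (nat set \<Rightarrow> real) set" where
  "path_dirs n p \<equiv> span (diffs (complete_path_polytope n p))"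

lemma walk_vec_in_path_polytope: "is_p_path E n p vs \<Longrightarrow> walk_vec vs \<in> path_polytope E n p"
  unfolding path_polytope_def
  by (rule hull_inc) (auto simp: is_p_path_def incidence_vec_path_edges[symmetric])

lemma complete_path_polytope_nonempty:
  assumes "1 \<le> p" "p \<le> n"
  shows "complete_path_polytope n p \<noteq> {}"
proof -
  have "is_p_path (complete_edges n) n p (0 # [1..<p] @ [n])"
    using assms by (intro is_p_path_through_inner) auto
  then show ?thesis
    using walk_vec_in_path_polytope by blast
qed

section \<open>Directions of the polytope spanned by exchanging a window\<close>

lemma walk_vec_segment_diff_in_path_dirs:
  assumes "is_p_path (complete_edges n) n p (H @ w # M1 @ r # T)"
    and "is_p_path (complete_edges n) n p (H @ w # M2 @ r # T)"
  shows "walk_vec (w # M1 @ [r]) - walk_vec (w # M2 @ [r]) \<in> path_dirs n p"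
proof -
  have split: "walk_vec (H @ w # M @ r # T) = walk_vec (H @ [w]) + walk_vec (w # M @ [r]) + walk_vec (r # T)"
    for M
    using walk_vec_append[of H w "M @ r # T"] walk_vec_append[of "w # M" r T] by simp
  have "walk_vec (H @ w # M1 @ r # T) - walk_vec (H @ w # M2 @ r # T) \<in> diffs (complete_path_polytope n p)"
    using assms walk_vec_in_path_polytope unfolding diffs_def by blast
  then show ?thesis
    unfolding split by (intro real_vector.span_base) (simp add: algebra_simps)
qed

text \<open>A window \<open>w # M @ [r]\<close> whose inner vertices range over A can be completed, by one
  and the same head and tail, to a p-path for every choice of M: the f vertices of the completion
  that are not in the window nor 0 or n are taken from outside A.\<close>

lemma path_frame_exists:
  assumes w: "w = 0 \<or> w \<in> A" and r: "r = n \<or> r \<in> A" and "w \<noteq> r" "\<not> (w = 0 \<and> r = n)"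
    and A: "A \<subseteq> {1..<n}"
    and count: "f + k + (if w = 0 then 0 else 1) + (if r = n then 0 else 1) + 1 = p"
    and room: "f + card A \<le> n - 1"
  obtains H T where "\<And>M. distinct M \<Longrightarrow> set M \<subseteq> A \<Longrightarrow> w \<notin> set M \<Longrightarrow> r \<notin> set M \<Longrightarrow>
      length M = k \<Longrightarrow> is_p_path (complete_edges n) n p (H @ w # M @ r # T)"
proof -
  have "f \<le> card ({1..<n} - A)"
    using A room finite_subset[OF A] by (simp add: card_Diff_subset)
  then obtain F where F: "distinct F" "set F \<subseteq> {1..<n} - A" "length F = f"
    by (meson finite_Diff finite_atLeastLessThan obtain_distinct_list_of_card)
  have n: "0 < n"
    using \<open>w \<noteq> r\<close> w r A by auto
  consider "w = 0" "r \<in> A" | "w \<in> A" "r = n" | "w \<in> A" "r \<in> A" "w \<noteq> 0" "r \<noteq> n"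
    using assms A by fastforce
  then show thesis
  proof cases
    case 1
    show thesis
    proof (rule that[of "[]" "F @ [n]"])
      fix M assume "distinct M" "set M \<subseteq> A" "w \<notin> set M" "r \<notin> set M" "length M = k"
      then have "is_p_path (complete_edges n) n p (0 # (M @ r # F) @ [n])"
        using 1 F A count n by (intro is_p_path_through_inner) auto
      then show "is_p_path (complete_edges n) n p ([] @ w # M @ r # F @ [n])"
        using 1 by simp
    qed
  next
    case 2
    show thesis
    proof (rule that[of "0 # F" "[]"])
      fix M assume "distinct M" "set M \<subseteq> A" "w \<notin> set M" "r \<notin> set M" "length M = k"
      then have "is_p_path (complete_edges n) n p (0 # (F @ w # M) @ [n])"
        using 2 F A count n by (intro is_p_path_through_inner) auto
      then show "is_p_path (complete_edges n) n p ((0 # F) @ w # M @ r # [])"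
        using 2 by simp
    qed
  next
    case 3
    show thesis
    proof (rule that[of "0 # F" "[n]"])
      fix M assume "distinct M" "set M \<subseteq> A" "w \<notin> set M" "r \<notin> set M" "length M = k"
      then have "is_p_path (complete_edges n) n p (0 # (F @ w # M @ [r]) @ [n])"
        using 3 F A count n \<open>w \<noteq> r\<close> by (intro is_p_path_through_inner) auto
      then show "is_p_path (complete_edges n) n p ((0 # F) @ w # M @ r # [n])"
        by simp
    qed
  qed
qed

lemma window_diff_in_path_dirs:
  assumes "w = 0 \<or> w \<in> A" "r = n \<or> r \<in> A" "w \<noteq> r" "\<not> (w = 0 \<and> r = n)" "A \<subseteq> {1..<n}"
    and "f + k + (if w = 0 then 0 else 1) + (if r = n then 0 else 1) + 1 = p"
    and "f + card A \<le> n - 1"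
    and "distinct M1" "set M1 \<subseteq> A" "w \<notin> set M1" "r \<notin> set M1" "length M1 = k"
    and "distinct M2" "set M2 \<subseteq> A" "w \<notin> set M2" "r \<notin> set M2" "length M2 = k"
  shows "walk_vec (w # M1 @ [r]) - walk_vec (w # M2 @ [r]) \<in> path_dirs n p"
proof -
  obtain H T where "\<And>M. distinct M \<Longrightarrow> set M \<subseteq> A \<Longrightarrow> w \<notin> set M \<Longrightarrow> r \<notin> set M \<Longrightarrow>
      length M = k \<Longrightarrow> is_p_path (complete_edges n) n p (H @ w # M @ r # T)"
    using path_frame_exists[OF assms(1-7)] by blast
  then show ?thesis
    using assms(8-) by (intro walk_vec_segment_diff_in_path_dirs) auto
qed

lemma walk_vec_replace_middle:
  assumes p: "4 \<le> p" "p < n" and a: "a < n" and r: "0 < r" "r \<le> n"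
    and bc: "b \<in> {1..<n}" "c \<in> {1..<n}" and distinct: "distinct [a, b, c, r]"
    and ends: "\<not> (a = 0 \<and> r = n)"
  shows "walk_vec [a, b, r] - walk_vec [a, c, r] \<in> path_dirs n p"
proof -
  have "walk_vec (a # [b] @ [r]) - walk_vec (a # [c] @ [r]) \<in> path_dirs n p"
  proof (cases "a = 0")
    case True
    with ends r have "r \<in> {1..<n}" by auto
    with True bc distinct p show ?thesis
      by (intro window_diff_in_path_dirs[where A = "{b, c, r}" and f = "p - 3" and k = 1]) auto
  next
    case False
    show ?thesis
    proof (cases "r = n")
      case True
      with False a bc distinct p show ?thesis
        by (intro window_diff_in_path_dirs[where A = "{a, b, c}" and f = "p - 3" and k = 1]) auto
    next
      case False': False
      with False a r bc distinct p show ?thesis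
        by (intro window_diff_in_path_dirs[where A = "{a, b, c, r}" and f = "p - 4" and k = 1]) auto
    qed
  qed
  then show ?thesis by simp
qed

lemma walk_vec_swap_middle:
  assumes p: "4 \<le> p" "p \<le> n" and a: "a < n" and r: "0 < r" "r \<le> n"
    and bc: "b \<in> {1..<n}" "c \<in> {1..<n}" and distinct: "distinct [a, b, c, r]"
    and ends: "\<not> (a = 0 \<and> r = n)" and p5: "a = 0 \<or> r = n \<or> 5 \<le> p"
  shows "walk_vec [a, b, c, r] - walk_vec [a, c, b, r] \<in> path_dirs n p"
proof -
  have "walk_vec (a # [b, c] @ [r]) - walk_vec (a # [c, b] @ [r]) \<in> path_dirs n p"
  proof (cases "a = 0")
    case True
    with ends r have "r \<in> {1..<n}" by auto
    with True bc distinct p show ?thesis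
      by (intro window_diff_in_path_dirs[where A = "{b, c, r}" and f = "p - 4" and k = 2]) auto
  next
    case False
    show ?thesis
    proof (cases "r = n")
      case True
      with False a bc distinct p show ?thesis
        by (intro window_diff_in_path_dirs[where A = "{a, b, c}" and f = "p - 4" and k = 2]) auto
    next
      case False': False
      with False a r bc distinct p p5 show ?thesis
        by (intro window_diff_in_path_dirs[where A = "{a, b, c, r}" and f = "p - 5" and k = 2]) auto
    qed
  qed
  then show ?thesis by simp
qed

lemma edge_vec_pivot_diff:
  assumes p: "4 \<le> p" "p < n" and a: "a < n" and bc: "b \<in> {1..<n}" "c \<in> {1..<n}"
    and distinct: "distinct [a, b, c]"
  shows "edge_vec a b - edge_vec a c \<in> path_dirs n p"
proof -
  obtain r where r: "0 < r" "r \<le> n" "distinct [a, b, c, r]" "a = 0 \<longleftrightarrow> r \<noteq> n"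
  proof (cases "a = 0")
    case True
    have "\<exists>r\<in>{1, 2, 3}. r \<noteq> b \<and> r \<noteq> c"
      by auto
    then obtain r where "r \<in> {1, 2, 3}" "r \<noteq> b" "r \<noteq> c"
      by blast
    with True p distinct show thesis
      by (intro that[of r]) auto
  next
    case False
    with a bc distinct show thesis
      by (intro that[of n]) auto
  qed
  have "walk_vec [a, b, r] - walk_vec [a, c, r] \<in> path_dirs n p"
    using assms r by (intro walk_vec_replace_middle) auto
  moreover have "walk_vec [a, b, c, r] - walk_vec [a, c, b, r] \<in> path_dirs n p"
    using assms r by (intro walk_vec_swap_middle) auto
  moreover have "edge_vec a b - edge_vec a c =
      (1/2) *\<^sub>R ((walk_vec [a, b, r] - walk_vec [a, c, r]) + (walk_vec [a, b, c, r] - walk_vec [a, c, b, r]))"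
    by (simp add: fun_eq_iff scaleR_fun_def edge_vec_commute[of c b] algebra_simps)
  ultimately show ?thesis
    by (metis real_vector.span_add real_vector.span_scale)
qed

text \<open>The valid equations determine the coordinates of these edges from all the others,
  for p < n and for p = n respectively.\<close>

definition short_dep_edges :: "nat \<Rightarrow> nat set set" where
  "short_dep_edges n = {{0, n}, {0, 1}, {1, n}, {1, 2}}"

definition ham_dep_edges :: "nat \<Rightarrow> nat set set" where
  "ham_dep_edges n = insert {0, n} (insert {2, 3} ((\<lambda>v. {1, v}) ` ({0..n} - {1})))"

lemma short_dep_edges_subset: "4 \<le> n \<Longrightarrow> short_dep_edges n \<subseteq> complete_edges n"
  by (auto simp: short_dep_edges_def intro!: edge_in_complete_edges)

lemma ham_dep_edges_subset: "4 \<le> n \<Longrightarrow> ham_dep_edges n \<subseteq> complete_edges n"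
  by (auto simp: ham_dep_edges_def intro!: edge_in_complete_edges)

lemma card_short_dep_edges: "4 \<le> n \<Longrightarrow> card (short_dep_edges n) = 4"
  by (simp add: short_dep_edges_def doubleton_eq_iff)

lemma card_ham_dep_edges:
  assumes "4 \<le> n"
  shows "card (ham_dep_edges n) = n + 2"
proof -
  let ?star = "(\<lambda>v. {1, v}) ` ({0..n} - {1 :: nat})"
  have "inj_on (\<lambda>v. {1, v}) ({0..n} - {1 :: nat})"
    by (rule inj_onI) (auto simp: doubleton_eq_iff)
  then have "card ?star = n"
    using assms by (simp add: card_image)
  moreover have "{0, n} \<notin> insert {2, 3} ?star" "{2, 3} \<notin> ?star"
  proof -
    have "1 \<in> e" if "e \<in> ?star" for e
      using that by blast
    moreover have "{0, n} \<noteq> {2, 3 :: nat}" "1 \<notin> {0, n}" "1 \<notin> {2, 3 :: nat}"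
      using assms by auto
    ultimately show "{0, n} \<notin> insert {2, 3} ?star" "{2, 3} \<notin> ?star"
      by blast+
  qed
  ultimately show ?thesis
    by (simp add: ham_dep_edges_def)
qed

lemma ham_dep_edgesE:
  assumes "e \<in> ham_dep_edges n"
  obtains "e = {0, n}" | "e = {2, 3}" | u where "u \<le> n" "u \<noteq> 1" "e = {1, u}"
proof -
  consider "e = {0, n}" | "e = {2, 3}" | "e \<in> (\<lambda>v. {1, v}) ` ({0..n} - {1})"
    using assms unfolding ham_dep_edges_def by blast
  then show thesis
  proof cases
    case 3
    then obtain u where "u \<in> {0..n} - {1}" "e = {1, u}"
      by blast
    then show thesis
      by (intro that(3)[of u]) auto
  qed (use that in blast)+
qed

abbreviation dirs_mod :: "nat \<Rightarrow> nat \<Rightarrow> nat set set \<Rightarrow> (nat set \<Rightarrow> real) set" where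
  "dirs_mod n p S \<equiv> span (diffs (complete_path_polytope n p) \<union> vanishing_on (complete_edges n - S))"

lemma dirs_mod_of_path_dirs: "x \<in> path_dirs n p \<Longrightarrow> x \<in> dirs_mod n p S"
  using real_vector.span_mono[of "diffs (complete_path_polytope n p)"] by blast

lemma edge_vec_in_dirs_mod: "{a, b} \<in> S \<Longrightarrow> edge_vec a b \<in> dirs_mod n p S"
  by (rule real_vector.span_base) (auto simp: vanishing_on_def edge_vec_def)

lemma dirs_mod_by_diff: "x - y \<in> path_dirs n p \<Longrightarrow> y \<in> dirs_mod n p S \<Longrightarrow> x \<in> dirs_mod n p S"
  using dirs_mod_of_path_dirs span_mem_of_diff by blast

lemma edge_vec_in_span_if_ordered:
  assumes "\<And>a b. a < b \<Longrightarrow> b \<le> n \<Longrightarrow> edge_vec a b \<in> N" "i \<le> n" "j \<le> n" "i \<noteq> j"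
  shows "edge_vec i j \<in> N"
  using assms(1)[of i j] assms(1)[of j i] assms(2-) by (metis edge_vec_commute linorder_neqE_nat)

lemma short_dirs_mod_inner:
  assumes p: "4 \<le> p" "p < n" and ab: "a \<in> {1..<n}" "b \<in> {1..<n}" "a \<noteq> b"
  shows "edge_vec a b \<in> dirs_mod n p (short_dep_edges n)"
proof -
  let ?N = "dirs_mod n p (short_dep_edges n)"
  have one: "edge_vec 1 c \<in> ?N" if c: "c \<in> {2..<n}" for c
  proof (cases "c = 2")
    case True
    then show ?thesis by (intro edge_vec_in_dirs_mod) (simp add: short_dep_edges_def)
  next
    case False
    with c p have "edge_vec 1 c - edge_vec 1 2 \<in> path_dirs n p"
      by (intro edge_vec_pivot_diff) auto
    then show ?thesis
      by (rule dirs_mod_by_diff) (intro edge_vec_in_dirs_mod, simp add: short_dep_edges_def)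
  qed
  show ?thesis
  proof (cases "a = 1 \<or> b = 1")
    case True
    then consider "a = 1" "b \<in> {2..<n}" | "b = 1" "a \<in> {2..<n}"
      using ab by fastforce
    then show ?thesis
    proof cases
      case 1
      then show ?thesis using one[of b] by simp
    next
      case 2
      then show ?thesis using one[of a] edge_vec_commute[of a b] by simp
    qed
  next
    case False
    with ab p have "edge_vec a b - edge_vec a 1 \<in> path_dirs n p"
      by (intro edge_vec_pivot_diff) auto
    moreover have "edge_vec a 1 \<in> ?N"
      using False ab one[of a] by (simp add: edge_vec_commute)
    ultimately show ?thesis
      by (rule dirs_mod_by_diff)
  qed
qed

lemma short_dirs_mod_first:
  assumes p: "4 \<le> p" "p < n" and b: "b \<in> {1..<n}"
  shows "edge_vec 0 b \<in> dirs_mod n p (short_dep_edges n)"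
proof (cases "b = 1")
  case True
  then show ?thesis by (intro edge_vec_in_dirs_mod) (simp add: short_dep_edges_def)
next
  case False
  with b p have "edge_vec 0 b - edge_vec 0 1 \<in> path_dirs n p"
    by (intro edge_vec_pivot_diff) auto
  then show ?thesis
    by (rule dirs_mod_by_diff) (intro edge_vec_in_dirs_mod, simp add: short_dep_edges_def)
qed

lemma short_dirs_mod_last:
  assumes p: "4 \<le> p" "p < n" and a: "a \<in> {1..<n}"
  shows "edge_vec a n \<in> dirs_mod n p (short_dep_edges n)"
proof (cases "a = 1")
  case True
  then show ?thesis by (intro edge_vec_in_dirs_mod) (simp add: short_dep_edges_def)
next
  case False
  define w where "w = (if a = 2 then 3 else (2::nat))"
  have w: "w \<in> {2..<n}" "w \<noteq> a"
    using p by (auto simp: w_def)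
  have "edge_vec a n - (edge_vec 1 n + edge_vec w 1 - edge_vec w a) =
      walk_vec [w, a, n] - walk_vec [w, 1, n]"
    by (simp add: fun_eq_iff edge_vec_commute[of a w] edge_vec_commute[of 1 w])
  also have "\<dots> \<in> path_dirs n p"
    using a w False p by (intro walk_vec_replace_middle) auto
  finally show ?thesis
  proof (rule dirs_mod_by_diff, intro real_vector.span_add real_vector.span_diff)
    show "edge_vec 1 n \<in> dirs_mod n p (short_dep_edges n)"
      by (intro edge_vec_in_dirs_mod) (simp add: short_dep_edges_def)
    show "edge_vec w 1 \<in> dirs_mod n p (short_dep_edges n)" "edge_vec w a \<in> dirs_mod n p (short_dep_edges n)"
      using p a w by (intro short_dirs_mod_inner; simp)+
  qed
qed

lemma edge_vec_in_dirs_mod_short: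
  assumes "4 \<le> p" "p < n" "i \<le> n" "j \<le> n" "i \<noteq> j"
  shows "edge_vec i j \<in> dirs_mod n p (short_dep_edges n)"
proof (rule edge_vec_in_span_if_ordered[OF _ assms(3-)])
  fix a b assume ab: "a < b" "b \<le> n"
  consider "a = 0" "b = n" | "a = 0" "b < n" | "0 < a" "b = n" | "0 < a" "b < n"
    using ab by (cases "a = 0"; cases "b = n") auto
  then show "edge_vec a b \<in> dirs_mod n p (short_dep_edges n)"
  proof cases
    case 1
    then show ?thesis by (intro edge_vec_in_dirs_mod) (simp add: short_dep_edges_def)
  next
    case 2
    with ab assms show ?thesis using short_dirs_mod_first[of p n b] by simp
  next
    case 3
    with ab assms show ?thesis using short_dirs_mod_last[of p n a] by simp
  next
    case 4
    with ab assms show ?thesis by (intro short_dirs_mod_inner) auto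
  qed
qed

lemma ham_dirs_mod_star: "v \<le> n \<Longrightarrow> v \<noteq> 1 \<Longrightarrow> edge_vec 1 v \<in> dirs_mod n p (ham_dep_edges n)"
  by (intro edge_vec_in_dirs_mod) (auto simp: ham_dep_edges_def)

lemma ham_dirs_mod_shift:
  assumes xyz: "x \<in> {2..<n}" "y \<in> {2..<n}" "z \<in> {2..<n}" "distinct [x, y, z]"
  shows "edge_vec y z - edge_vec x z \<in> dirs_mod n n (ham_dep_edges n)"
proof -
  have "(edge_vec y z - edge_vec x z) - (edge_vec 1 y - edge_vec 1 x) =
      walk_vec [1, x, y, z] - walk_vec [1, y, x, z]"
    by (simp add: fun_eq_iff edge_vec_commute[of y x])
  also have "\<dots> \<in> path_dirs n n"
    using xyz by (intro walk_vec_swap_middle) auto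
  finally show ?thesis
    by (rule dirs_mod_by_diff) (use xyz in \<open>intro real_vector.span_diff ham_dirs_mod_star; simp\<close>)
qed

lemma ham_dirs_mod_inner:
  assumes ab: "a \<in> {2..<n}" "b \<in> {2..<n}" "a \<noteq> b"
  shows "edge_vec a b \<in> dirs_mod n n (ham_dep_edges n)"
proof -
  let ?N = "dirs_mod n n (ham_dep_edges n)"
  have two: "edge_vec 2 c \<in> ?N" if c: "c \<in> {3..<n}" for c
  proof -
    have dep: "edge_vec 2 3 \<in> ?N"
      by (intro edge_vec_in_dirs_mod) (simp add: ham_dep_edges_def)
    moreover have "edge_vec 2 c - edge_vec 2 3 \<in> ?N" if "c \<noteq> 3"
      using ham_dirs_mod_shift[of 3 n c 2] c that by (simp add: edge_vec_commute)
    ultimately show ?thesis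
      by (cases "c = 3") (auto intro: span_mem_of_diff)
  qed
  show ?thesis
  proof (cases "a = 2 \<or> b = 2")
    case True
    then consider "a = 2" "b \<in> {3..<n}" | "b = 2" "a \<in> {3..<n}"
      using ab by fastforce
    then show ?thesis
    proof cases
      case 1
      then show ?thesis using two[of b] by simp
    next
      case 2
      then show ?thesis using two[of a] edge_vec_commute[of a b] by simp
    qed
  next
    case False
    with ab have "edge_vec a b - edge_vec 2 b \<in> ?N"
      by (intro ham_dirs_mod_shift) auto
    moreover have "edge_vec 2 b \<in> ?N"
      using two False ab by simp
    ultimately show ?thesis
      by (rule span_mem_of_diff)
  qed
qed

lemma ham_dirs_mod_first:
  assumes n: "4 \<le> n" and a: "a \<in> {2..<n}"
  shows "edge_vec 0 a \<in> dirs_mod n n (ham_dep_edges n)"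
proof -
  define z where "z = (if a = 2 then 3 else (2::nat))"
  have z: "z \<in> {2..<n}" "z \<noteq> a"
    using n a by (auto simp: z_def)
  have "edge_vec 0 a - (edge_vec 1 0 + edge_vec a z - edge_vec 1 z) =
      walk_vec [0, a, 1, z] - walk_vec [0, 1, a, z]"
    by (simp add: fun_eq_iff edge_vec_commute[of a "Suc 0"] edge_vec_commute[of 0 "Suc 0"])
  also have "\<dots> \<in> path_dirs n n"
    using a z n by (intro walk_vec_swap_middle) auto
  finally show ?thesis
    by (rule dirs_mod_by_diff)
      (use a z in \<open>intro real_vector.span_add real_vector.span_diff ham_dirs_mod_star ham_dirs_mod_inner; simp\<close>)
qed

lemma ham_dirs_mod_last:
  assumes n: "4 \<le> n" and a: "a \<in> {2..<n}"
  shows "edge_vec a n \<in> dirs_mod n n (ham_dep_edges n)"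
proof -
  define w where "w = (if a = 2 then 3 else (2::nat))"
  have w: "w \<in> {2..<n}" "w \<noteq> a"
    using n a by (auto simp: w_def)
  have "edge_vec a n - (edge_vec w a + edge_vec 1 n - edge_vec 1 w) =
      walk_vec [w, 1, a, n] - walk_vec [w, a, 1, n]"
    by (simp add: fun_eq_iff edge_vec_commute[of a "Suc 0"] edge_vec_commute[of w "Suc 0"])
  also have "\<dots> \<in> path_dirs n n"
    using a w n by (intro walk_vec_swap_middle) auto
  finally show ?thesis
    by (rule dirs_mod_by_diff)
      (use a w n in \<open>intro real_vector.span_add real_vector.span_diff ham_dirs_mod_star ham_dirs_mod_inner; simp\<close>)
qed

lemma edge_vec_in_dirs_mod_ham:
  assumes n: "4 \<le> n" and "i \<le> n" "j \<le> n" "i \<noteq> j"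
  shows "edge_vec i j \<in> dirs_mod n n (ham_dep_edges n)"
proof (rule edge_vec_in_span_if_ordered[OF _ assms(2-)])
  fix a b assume ab: "a < b" "b \<le> n"
  consider "a = 1" | "b = 1" | "a = 0" "b = n" | "a = 0" "2 \<le> b" "b < n" | "2 \<le> a" "b = n"
    | "2 \<le> a" "b < n"
    using ab by (cases "a = 1 \<or> b = 1"; cases "a = 0"; cases "b = n") auto
  then show "edge_vec a b \<in> dirs_mod n n (ham_dep_edges n)"
  proof cases
    case 3
    then show ?thesis by (intro edge_vec_in_dirs_mod) (simp add: ham_dep_edges_def)
  next
    case 4
    with ab n show ?thesis using ham_dirs_mod_first[of n b] by simp
  next
    case 5
    with ab n show ?thesis using ham_dirs_mod_last[of n a] by simp
  next
    case 6
    with ab show ?thesis by (intro ham_dirs_mod_inner) auto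
  next
    case 1
    with ab show ?thesis using ham_dirs_mod_star[of b n n] by simp
  next
    case 2
    with ab show ?thesis using ham_dirs_mod_star[of a n n] edge_vec_commute[of a b] by simp
  qed
qed

section \<open>Equations valid on the polytope\<close>

definition degree_at :: "nat set set \<Rightarrow> nat \<Rightarrow> (nat set \<Rightarrow> real) \<Rightarrow> real" where
  "degree_at E v f = (\<Sum>e\<in>E. if v \<in> e then f e else 0)"

lemma linear_degree_at: "linear (degree_at E v)"
  unfolding degree_at_def
  by (intro real_vector.linear_compose_sum) (auto intro: linearI simp: scaleR_fun_def)

lemma degree_at_eq_sum_subset:
  assumes "finite E" "F \<subseteq> E" "\<And>e. e \<notin> S \<Longrightarrow> g e = 0"
    and "\<And>e. e \<in> S \<Longrightarrow> e \<notin> F \<Longrightarrow> v \<in> e \<Longrightarrow> g e = 0"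
  shows "degree_at E v g = (\<Sum>e\<in>F. if v \<in> e then g e else 0)"
  unfolding degree_at_def using assms by (intro sum.mono_neutral_right) auto

lemma degree_at_edge_vec:
  assumes "a \<noteq> b" "a \<le> n" "b \<le> n"
  shows "degree_at (complete_edges n) v (edge_vec a b) = (if v = a \<or> v = b then 1 else 0)"
proof -
  have "degree_at (complete_edges n) v (edge_vec a b) =
      (\<Sum>e\<in>complete_edges n. if e = {a, b} then (if v = a \<or> v = b then 1 else 0) else 0)"
    unfolding degree_at_def by (rule sum.cong) (auto simp: edge_vec_def)
  also have "\<dots> = (if v = a \<or> v = b then 1 else 0)"
    using assms edge_in_complete_edges finite_complete_edges by simp
  finally show ?thesis .
qed

lemma sum_edge_vec:
  assumes "a \<noteq> b" "a \<le> n" "b \<le> n"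
  shows "(\<Sum>e\<in>complete_edges n. edge_vec a b e) = 1"
  using assms edge_in_complete_edges finite_complete_edges by (simp add: edge_vec_def)

lemma degree_at_walk_vec:
  assumes "distinct vs" "set vs \<subseteq> {0..n}" "vs \<noteq> []"
  shows "degree_at (complete_edges n) v (walk_vec vs) =
    2 * (if v \<in> set vs then 1 else 0) - (if v = hd vs then 1 else 0) - (if v = last vs then 1 else 0)"
  using assms
proof (induction vs rule: walk_vec.induct)
  case (3 u w vs)
  have "degree_at (complete_edges n) v (walk_vec (u # w # vs)) =
      degree_at (complete_edges n) v (edge_vec u w) + degree_at (complete_edges n) v (walk_vec (w # vs))"
    by (simp add: real_vector.linear_add[OF linear_degree_at])
  also have "degree_at (complete_edges n) v (edge_vec u w) = (if v = u \<or> v = w then 1 else 0)"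
    using "3.prems" by (intro degree_at_edge_vec) auto
  finally show ?case
    using 3 by (auto split: if_splits)
qed (simp_all add: degree_at_def zero_fun_def)

lemma sum_walk_vec:
  assumes "distinct vs" "set vs \<subseteq> {0..n}" "vs \<noteq> []"
  shows "(\<Sum>e\<in>complete_edges n. walk_vec vs e) = real (length vs) - 1"
  using assms
proof (induction vs rule: walk_vec.induct)
  case (3 u w vs)
  have "(\<Sum>e\<in>complete_edges n. walk_vec (u # w # vs) e) =
      (\<Sum>e\<in>complete_edges n. edge_vec u w e) + (\<Sum>e\<in>complete_edges n. walk_vec (w # vs) e)"
    by (simp add: sum.distrib)
  also have "(\<Sum>e\<in>complete_edges n. edge_vec u w e) = 1"
    using "3.prems" by (intro sum_edge_vec) auto
  finally show ?case
    using 3 by simp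
qed simp_all

lemma walk_vec_0n:
  assumes path: "is_p_path E n p vs" and p: "2 \<le> p"
  shows "walk_vec vs {0, n} = 0"
proof -
  have vs: "distinct vs" "length vs = p + 1" "hd vs = 0" "last vs = n"
    using path by (auto simp: is_p_path_def)
  then have "vs \<noteq> []"
    by auto
  with vs have ends: "vs ! 0 = 0" "vs ! p = n"
    by (metis hd_conv_nth, metis last_conv_nth add_diff_cancel_right')
  have "{0, n} \<notin> path_edges vs"
  proof
    assume "{0, n} \<in> path_edges vs"
    then obtain i where i: "{0, n} = {vs ! i, vs ! Suc i}" "Suc i < length vs"
      by (auto simp: path_edges_def)
    have index: "vs ! j = vs ! k \<Longrightarrow> j < length vs \<Longrightarrow> k < length vs \<Longrightarrow> j = k" for j k
      using vs(1) by (simp add: nth_eq_iff_index_eq)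
    from i(1) consider "vs ! i = 0" "vs ! Suc i = n" | "vs ! Suc i = 0"
      by (auto simp: doubleton_eq_iff)
    then show False
    proof cases
      case 1
      then have "i = 0" "Suc i = p"
        using index[of i 0] index[of "Suc i" p] vs ends i(2) by auto
      with p show False by simp
    next
      case 2
      then show False
        using index[of "Suc i" 0] vs ends i(2) by auto
    qed
  qed
  then show ?thesis
    using vs(1) by (simp add: incidence_vec_path_edges[symmetric] incidence_vec_def)
qed

lemma path_dirs_linear_eq_zero:
  fixes \<phi> :: "(nat set \<Rightarrow> real) \<Rightarrow> real"
  assumes "linear \<phi>" and "\<And>vs. is_p_path (complete_edges n) n p vs \<Longrightarrow> \<phi> (walk_vec vs) = c"
    and "g \<in> path_dirs n p"
  shows "\<phi> g = 0"
proof -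
  have "\<phi> x = c" if "x \<in> {incidence_vec (path_edges vs) |vs. is_p_path (complete_edges n) n p vs}" for x
    using that assms(2) by (auto simp: is_p_path_def incidence_vec_path_edges)
  then show ?thesis
    using linear_eq_zero_on_span_diffs_hull[OF assms(1)] assms(3)
    unfolding path_polytope_def by blast
qed

lemma path_dirs_outside_edges: "g \<in> path_dirs n p \<Longrightarrow> e \<notin> complete_edges n \<Longrightarrow> g e = 0"
proof (rule path_dirs_linear_eq_zero[OF linear_eval, where c = 0])
  fix vs assume path: "is_p_path (complete_edges n) n p vs" and "e \<notin> complete_edges n"
  then have "e \<notin> path_edges vs"
    by (auto simp: is_p_path_def path_edges_def)
  with path show "walk_vec vs e = 0"
    by (simp add: is_p_path_def incidence_vec_path_edges[symmetric] incidence_vec_def)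
qed

lemma path_dirs_0n: "2 \<le> p \<Longrightarrow> g \<in> path_dirs n p \<Longrightarrow> g {0, n} = 0"
  by (rule path_dirs_linear_eq_zero[OF linear_eval, where c = 0]) (auto intro: walk_vec_0n)

lemma path_dirs_sum: "g \<in> path_dirs n p \<Longrightarrow> (\<Sum>e\<in>complete_edges n. g e) = 0"
proof (rule path_dirs_linear_eq_zero[OF linear_sum_apply, where c = p])
  fix vs assume "is_p_path (complete_edges n) n p vs"
  then have "distinct vs" "set vs \<subseteq> {0..n}" "vs \<noteq> []" "length vs = p + 1"
    by (auto simp: is_p_path_def)
  then show "(\<Sum>e\<in>complete_edges n. walk_vec vs e) = real p"
    by (simp add: sum_walk_vec)
qed

lemma path_dirs_degree_end:
  assumes "0 < n" "v = 0 \<or> v = n" "g \<in> path_dirs n p"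
  shows "degree_at (complete_edges n) v g = 0"
proof (rule path_dirs_linear_eq_zero[OF linear_degree_at, where c = 1])
  fix vs assume "is_p_path (complete_edges n) n p vs"
  then have "distinct vs" "set vs \<subseteq> {0..n}" "vs \<noteq> []" "hd vs = 0" "last vs = n"
    by (auto simp: is_p_path_def)
  moreover have "v \<in> set vs"
    using assms(2) calculation hd_in_set last_in_set by metis
  ultimately show "degree_at (complete_edges n) v (walk_vec vs) = 1"
    using assms(1,2) by (auto simp: degree_at_walk_vec)
qed (use assms in auto)

lemma ham_path_dirs_degree:
  assumes "0 < n" "v \<le> n" "g \<in> path_dirs n n"
  shows "degree_at (complete_edges n) v g = 0"
proof (cases "v = 0 \<or> v = n")
  case True
  with assms show ?thesis by (intro path_dirs_degree_end)
next
  case False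
  show ?thesis
  proof (rule path_dirs_linear_eq_zero[OF linear_degree_at, where c = 2])
    fix vs assume "is_p_path (complete_edges n) n n vs"
    then have vs: "distinct vs" "set vs \<subseteq> {0..n}" "vs \<noteq> []" "hd vs = 0" "last vs = n"
        "length vs = n + 1"
      by (auto simp: is_p_path_def)
    then have "set vs = {0..n}"
      by (intro card_subset_eq) (auto simp: distinct_card)
    with vs False assms(2) show "degree_at (complete_edges n) v (walk_vec vs) = 2"
      by (auto simp: degree_at_walk_vec)
  qed (use assms in auto)
qed

lemma path_dirs_supported:
  assumes "g \<in> path_dirs n p" "g \<in> vanishing_on (complete_edges n - S)" "e \<notin> S"
  shows "g e = 0"
  using assms path_dirs_outside_edges[OF assms(1)] by (auto simp: vanishing_on_def)

lemma short_dirs_vanishing_eq_zero: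
  assumes n: "4 \<le> n" and p: "2 \<le> p" and g: "g \<in> path_dirs n p"
    and van: "g \<in> vanishing_on (complete_edges n - short_dep_edges n)"
  shows "g = 0"
proof -
  have supp: "g e = 0" if "e \<notin> short_dep_edges n" for e
    using g van that by (rule path_dirs_supported)
  have ne: "n \<noteq> 0" "n \<noteq> 1" "n \<noteq> 2"
    using n by auto
  have "degree_at (complete_edges n) 0 g = (\<Sum>e\<in>{{0, n}, {0, 1}}. if 0 \<in> e then g e else 0)"
  proof (rule degree_at_eq_sum_subset[OF finite_complete_edges _ supp])
    show "{{0, n}, {0, 1}} \<subseteq> complete_edges n"
      using n by (auto intro: edge_in_complete_edges)
    fix e assume "e \<in> short_dep_edges n" "e \<notin> {{0, n}, {0, 1}}" "0 \<in> e"
    with ne show "g e = 0"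
      by (auto simp: short_dep_edges_def)
  qed
  also have "\<dots> = g {0, n} + g {0, 1}"
    using ne by (simp add: doubleton_eq_iff)
  finally have deg0: "g {0, n} + g {0, 1} = 0"
    using n g path_dirs_degree_end[of n 0 g p] by simp
  have "degree_at (complete_edges n) n g = (\<Sum>e\<in>{{0, n}, {1, n}}. if n \<in> e then g e else 0)"
  proof (rule degree_at_eq_sum_subset[OF finite_complete_edges _ supp])
    show "{{0, n}, {1, n}} \<subseteq> complete_edges n"
      using n by (auto intro: edge_in_complete_edges)
    fix e assume "e \<in> short_dep_edges n" "e \<notin> {{0, n}, {1, n}}" "n \<in> e"
    with ne show "g e = 0"
      by (auto simp: short_dep_edges_def)
  qed
  also have "\<dots> = g {0, n} + g {1, n}"
    using ne by (simp add: doubleton_eq_iff)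
  finally have degn: "g {0, n} + g {1, n} = 0"
    using n g path_dirs_degree_end[of n n g p] by simp
  have "(\<Sum>e\<in>complete_edges n. g e) = (\<Sum>e\<in>short_dep_edges n. g e)"
    using short_dep_edges_subset[OF n] supp by (intro sum.mono_neutral_right finite_complete_edges) auto
  also have "\<dots> = g {0, n} + g {0, 1} + g {1, n} + g {1, 2}"
    using ne by (simp add: short_dep_edges_def doubleton_eq_iff)
  finally have total: "g {0, n} + g {0, 1} + g {1, n} + g {1, 2} = 0"
    using g path_dirs_sum by simp
  have "g {0, n} = 0"
    using g p by (intro path_dirs_0n)
  with deg0 degn total have dep: "g e = 0" if "e \<in> short_dep_edges n" for e
    using that unfolding short_dep_edges_def by auto
  show "g = 0"
  proof
    fix e
    show "g e = 0 e"
      using dep supp by (cases "e \<in> short_dep_edges n") auto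
  qed
qed

lemma ham_dirs_degree_sum:
  assumes n: "4 \<le> n" and g: "g \<in> path_dirs n n"
    and van: "g \<in> vanishing_on (complete_edges n - ham_dep_edges n)"
    and v: "v \<le> n" and F: "F \<subseteq> complete_edges n"
    and outside_F: "\<And>e. e \<in> ham_dep_edges n \<Longrightarrow> e \<notin> F \<Longrightarrow> v \<in> e \<Longrightarrow> g e = 0"
  shows "(\<Sum>e\<in>F. if v \<in> e then g e else 0) = 0"
proof -
  have supp: "g e = 0" if "e \<notin> ham_dep_edges n" for e
    using g van that by (rule path_dirs_supported)
  have "degree_at (complete_edges n) v g = (\<Sum>e\<in>F. if v \<in> e then g e else 0)"
    by (rule degree_at_eq_sum_subset[OF finite_complete_edges F supp outside_F])
  with v n g show ?thesis
    using ham_path_dirs_degree by simp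
qed

lemma ham_dirs_vanishing_eq_zero:
  assumes n: "4 \<le> n" and g: "g \<in> path_dirs n n"
    and van: "g \<in> vanishing_on (complete_edges n - ham_dep_edges n)"
  shows "g = 0"
proof -
  note degree = ham_dirs_degree_sum[OF n g van]
  have g0n: "g {0, n} = 0"
    using n g by (intro path_dirs_0n) auto
  have star: "g {1, v} = 0" if v: "v \<le> n" "v \<notin> {1, 2, 3}" for v
  proof -
    have "(\<Sum>e\<in>{{1, v}}. if v \<in> e then g e else 0) = 0"
    proof (rule degree[OF v(1)])
      show "{{1, v}} \<subseteq> complete_edges n"
        using v n by (auto intro: edge_in_complete_edges)
      fix e assume "e \<in> ham_dep_edges n" "e \<notin> {{1, v}}" "v \<in> e"
      then show "g e = 0"
        using v g0n by (elim ham_dep_edgesE) auto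
    qed
    then show ?thesis
      by simp
  qed
  have "(\<Sum>e\<in>{{1, 2}, {2, 3}}. if 2 \<in> e then g e else 0) = 0"
    using n g0n by (intro degree) (auto intro: edge_in_complete_edges elim!: ham_dep_edgesE)
  moreover have "(\<Sum>e\<in>{{1, 3}, {2, 3}}. if 3 \<in> e then g e else 0) = 0"
    using n g0n by (intro degree) (auto intro: edge_in_complete_edges elim!: ham_dep_edgesE)
  moreover have "(\<Sum>e\<in>{{1, 2}, {1, 3}}. if 1 \<in> e then g e else 0) = 0"
  proof (rule degree)
    fix e assume "e \<in> ham_dep_edges n" "e \<notin> {{1, 2}, {1, 3}}" "1 \<in> e"
    then show "g e = 0"
      using n star by (elim ham_dep_edgesE) auto
  qed (use n in \<open>auto intro: edge_in_complete_edges\<close>)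
  ultimately have "g {1, 2} + g {2, 3} = 0" "g {1, 3} + g {2, 3} = 0" "g {1, 2} + g {1, 3} = 0"
    by (simp_all add: doubleton_eq_iff)
  then have g123: "g {1, 2} = 0" "g {1, 3} = 0" "g {2, 3} = 0"
    by linarith+
  show "g = 0"
  proof
    fix e
    show "g e = 0 e"
    proof (cases "e \<in> ham_dep_edges n")
      case True
      then show ?thesis
      proof (cases rule: ham_dep_edgesE)
        case (3 u)
        then show ?thesis
          using star[of u] g123 by (cases "u = 2 \<or> u = 3") auto
      qed (use g0n g123 in auto)
    qed (use g van in \<open>simp add: path_dirs_supported\<close>)
  qed
qed

lemma affine_dimension_complete_path_polytope:
  assumes p: "1 \<le> p" "p \<le> n" and S: "S \<subseteq> complete_edges n"
    and inj: "\<And>g. g \<in> path_dirs n p \<Longrightarrow> g \<in> vanishing_on (complete_edges n - S) \<Longrightarrow> g = 0"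
    and surj: "\<And>i j. i \<le> n \<Longrightarrow> j \<le> n \<Longrightarrow> i \<noteq> j \<Longrightarrow> edge_vec i j \<in> dirs_mod n p S"
  shows "affine_dimension (complete_path_polytope n p) = int (card (complete_edges n)) - int (card S)"
proof -
  have "dim (diffs (complete_path_polytope n p)) = card (complete_edges n - S)"
  proof (rule dim_eq_card_coordinates)
    fix e assume "e \<in> complete_edges n - S"
    then obtain i j where "i \<le> n" "j \<le> n" "i \<noteq> j" "e = {i, j}"
      by (auto simp: complete_edges_def)
    then show "(\<lambda>x. if x = e then 1 else 0) \<in> dirs_mod n p S"
      using surj by (simp add: edge_vec_def)
  qed (use inj finite_complete_edges in auto)
  moreover have "card (complete_edges n - S) = card (complete_edges n) - card S"
    and "card S \<le> card (complete_edges n)"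
    using S finite_complete_edges by (auto intro: card_Diff_subset finite_subset card_mono)
  ultimately show ?thesis
    using complete_path_polytope_nonempty[OF p]
    by (simp add: affine_dimension_def diffs_def)
qed

lemma affine_dimension_short_path_polytope:
  assumes "4 \<le> p" "p < n"
  shows "affine_dimension (complete_path_polytope n p) = int (card (complete_edges n)) - 4"
proof -
  have n: "4 \<le> n"
    using assms by simp
  have "affine_dimension (complete_path_polytope n p) =
      int (card (complete_edges n)) - int (card (short_dep_edges n))"
  proof (rule affine_dimension_complete_path_polytope)
    show "short_dep_edges n \<subseteq> complete_edges n"
      using n by (rule short_dep_edges_subset)
    show "g = 0" if "g \<in> path_dirs n p" "g \<in> vanishing_on (complete_edges n - short_dep_edges n)" for g
      using n assms that by (intro short_dirs_vanishing_eq_zero) auto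
    show "edge_vec i j \<in> dirs_mod n p (short_dep_edges n)" if "i \<le> n" "j \<le> n" "i \<noteq> j" for i j
      using assms that by (intro edge_vec_in_dirs_mod_short)
  qed (use assms in auto)
  with n show ?thesis
    by (simp add: card_short_dep_edges)
qed

lemma affine_dimension_ham_path_polytope:
  assumes n: "4 \<le> n"
  shows "affine_dimension (complete_path_polytope n n) = int (card (complete_edges n)) - int n - 2"
proof -
  have "affine_dimension (complete_path_polytope n n) =
      int (card (complete_edges n)) - int (card (ham_dep_edges n))"
  proof (rule affine_dimension_complete_path_polytope)
    show "ham_dep_edges n \<subseteq> complete_edges n"
      using n by (rule ham_dep_edges_subset)
    show "g = 0" if "g \<in> path_dirs n n" "g \<in> vanishing_on (complete_edges n - ham_dep_edges n)" for g
      using n that by (rule ham_dirs_vanishing_eq_zero)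
    show "edge_vec i j \<in> dirs_mod n n (ham_dep_edges n)" if "i \<le> n" "j \<le> n" "i \<noteq> j" for i j
      using n that by (rule edge_vec_in_dirs_mod_ham)
  qed (use n in auto)
  with n show ?thesis
    by (simp add: card_ham_dep_edges)
qed

theorem mainTheorem18:
  fixes n p :: nat
  assumes "4 \<le> p" and "p \<le> n"
  shows "(p \<le> n - 1 \<longrightarrow>
            affine_dimension (path_polytope (complete_edges n) n p)
              = int (card (complete_edges n)) - 4)
       \<and> (p = n \<longrightarrow>
            affine_dimension (path_polytope (complete_edges n) n p)
              = int (card (complete_edges n)) - int n - 2)"
proof (intro conjI impI)
  assume "p \<le> n - 1"
  with assms show "affine_dimension (path_polytope (complete_edges n) n p) = int (card (complete_edges n)) - 4"
    by (intro affine_dimension_short_path_polytope) auto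
next
  assume "p = n"
  with assms show "affine_dimension (path_polytope (complete_edges n) n p) =
      int (card (complete_edges n)) - int n - 2"
    using affine_dimension_ham_path_polytope by simp
qed

end
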